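(* Let $\mathfrak{X}=(X,\{R_0,R_1,R_2,R_3,R_4\})$ be a skew-symmetric $4$-class association scheme with $R_1^\top=R_2$ and $R_3^\top=R_4$, and suppose that the character table of $\mathfrak X$ is of type $3$ (in the sense described in the context). Then the digraph $(X,R_i)$ has $5$ distinct eigenvalues for each $1\leq i\leq 4$.
   Context: An association scheme on a finite set $X$ is a partition of $X\times X$ into relations $R_0$ (diagonal), $R_1,\dots,R_d$ closed under transposition, with constant intersection numbers; skew-symmetric means $R_0$ is the only symmetric relation. Schemes with $\le4$ classes are commutative; the primitive idempotents $E_j$ of the Bose–Mesner algebra satisfy $A_iE_j=p_i(j)E_j$, and the character table has $(j,i)$-entry $p_i(j)$. The symmetrization $\tilde{\mathfrak X}=(X,\{R_0,R_1\cup R_2,R_3\cup R_4\})$ has character table with rows $(1,k_1,k_2)$, $(1,r_1,t_1)$, $(1,r_2,t_2)$ (rows $\tilde E_0,\tilde E_1,\tilde E_2$ with multiplicities $1,m_1,m_2$). It is known that the primitive idempotents of $\mathfrak X$ can be ordered so that its character table (columns $A_0,\dots,A_4$) has rows $(1,k_1/2,k_1/2,k_2/2,k_2/2)$, $(1,\rho,\bar\rho,\tau,\bar\tau)$, $(1,\sigma,\bar\sigma,\omega,\bar\omega)$, $(1,\bar\sigma,\sigma,\bar\omega,\omega)$, $(1,\bar\rho,\rho,\bar\tau,\tau)$, where one of three cases holds; type 3 is the case $\rho=(r_1+\sqrt{-y})/2$, $\tau=(t_1+\sqrt{-z})/2$, $\sigma=(r_2+\sqrt{-b})/2$, $\omega=(t_2-\sqrt{-c})/2$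 with $b,c,y,z$ all positive reals. Eigenvalues of a digraph $(X,R)$ are those of its $01$ adjacency matrix. *)

theory Defs
  imports "HOL-Analysis.Analysis"
begin

text \<open>The finite set X is modelled by a finite type 'x; relations R 0, ..., R d are sets
of pairs. Matrices are complex matrices indexed by X.\<close>

definition assoc_scheme :: "nat \<Rightarrow> (nat \<Rightarrow> ('x::finite \<times> 'x) set) \<Rightarrow> bool" where
  "assoc_scheme d R \<longleftrightarrow>
     R 0 = Id \<and>
     (\<forall>i\<le>d. R i \<noteq> {}) \<and>
     (\<forall>i\<le>d. \<forall>j\<le>d. i \<noteq> j \<longrightarrow> R i \<inter> R j = {}) \<and>
     (\<Union>i\<le>d. R i) = UNIV \<and>
     (\<forall>i\<le>d. \<exists>j\<le>d. (R i)\<inverse> = R j) \<and>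
     (\<forall>i\<le>d. \<forall>j\<le>d. \<forall>k\<le>d. \<exists>p::nat. \<forall>x y. (x, y) \<in> R k \<longrightarrow>
         card {z. (x, z) \<in> R i \<and> (z, y) \<in> R j} = p)"

definition skew_symmetric_scheme :: "nat \<Rightarrow> (nat \<Rightarrow> ('x::finite \<times> 'x) set) \<Rightarrow> bool" where
  "skew_symmetric_scheme d R \<longleftrightarrow> assoc_scheme d R \<and> (\<forall>i. 1 \<le> i \<and> i \<le> d \<longrightarrow> (R i)\<inverse> \<noteq> R i)"

definition adj :: "('x::finite \<times> 'x) set \<Rightarrow> complex^'x^'x" where
  "adj R = (\<chi> x y. if (x, y) \<in> R then 1 else 0)"

definition eigenvalue :: "complex^'x^'x \<Rightarrow> complex \<Rightarrow> bool" where
  "eigenvalue A c \<longleftrightarrow> (\<exists>v. v \<noteq> 0 \<and> A *v v = c *s v)"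

definition bose_mesner :: "nat \<Rightarrow> (nat \<Rightarrow> ('x::finite \<times> 'x) set) \<Rightarrow> (complex^'x^'x) set" where
  "bose_mesner d R = {M. \<exists>c::nat \<Rightarrow> complex. M = (\<Sum>i\<le>d. mat (c i) ** adj (R i))}"

definition primitive_idempotent :: "nat \<Rightarrow> (nat \<Rightarrow> ('x::finite \<times> 'x) set) \<Rightarrow> complex^'x^'x \<Rightarrow> bool" where
  "primitive_idempotent d R E \<longleftrightarrow>
     E \<in> bose_mesner d R \<and> E ** E = E \<and> E \<noteq> 0 \<and>
     (\<forall>F\<in>bose_mesner d R. F ** F = F \<and> F ** E = F \<longrightarrow> F = 0 \<or> F = E)"

text \<open>Character table of a 4-class skew-symmetric scheme (R1^T = R2, R3^T = R4) is of type 3: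
  the primitive idempotents can be ordered E 0, ..., E 4 so that A_i E_j = p_i(j) E_j with the
  table rows (1,k1/2,k1/2,k2/2,k2/2), (1,rho,rho',tau,tau'), (1,sigma,sigma',omega,omega'),
  (1,sigma',sigma,omega',omega), (1,rho',rho,tau',tau) (primes = complex conjugates), where
  rho = (r1+sqrt(-y))/2, tau = (t1+sqrt(-z))/2, sigma = (r2+sqrt(-b))/2, omega = (t2-sqrt(-c))/2,
  b,c,y,z > 0, (1,k1,k2), (1,r1,t1), (1,r2,t2) being the rows of the character table of the
  symmetrization (A_1+A_2, A_3+A_4 acting on E_0, E_1+E_4, E_2+E_3).\<close>
definition char_table_type3 :: "(nat \<Rightarrow> ('x::finite \<times> 'x) set) \<Rightarrow> bool" where
  "char_table_type3 R \<longleftrightarrow>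
    (\<exists>(E::nat \<Rightarrow> complex^'x^'x) (p::nat \<Rightarrow> nat \<Rightarrow> complex)
       k1 k2 r1 t1 r2 t2 y z b c :: real.
      bij_betw E {0..4} {F. primitive_idempotent 4 R F} \<and>
      (\<forall>i\<le>4. \<forall>j\<le>4. adj (R i) ** E j = mat (p i j) ** E j) \<and>
      (\<forall>j\<le>4. p 0 j = 1) \<and>
      0 < y \<and> 0 < z \<and> 0 < b \<and> 0 < c \<and>
      (let \<rho> = (of_real r1 + csqrt (of_real (-y))) / 2;
           \<tau> = (of_real t1 + csqrt (of_real (-z))) / 2;
           \<sigma> = (of_real r2 + csqrt (of_real (-b))) / 2;
           \<omega> = (of_real t2 - csqrt (of_real (-c))) / 2 in
        p 1 0 = of_real k1 / 2 \<and> p 2 0 = of_real k1 / 2 \<and>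
        p 3 0 = of_real k2 / 2 \<and> p 4 0 = of_real k2 / 2 \<and>
        p 1 1 = \<rho> \<and> p 2 1 = cnj \<rho> \<and> p 3 1 = \<tau> \<and> p 4 1 = cnj \<tau> \<and>
        p 1 2 = \<sigma> \<and> p 2 2 = cnj \<sigma> \<and> p 3 2 = \<omega> \<and> p 4 2 = cnj \<omega> \<and>
        p 1 3 = cnj \<sigma> \<and> p 2 3 = \<sigma> \<and> p 3 3 = cnj \<omega> \<and> p 4 3 = \<omega> \<and>
        p 1 4 = cnj \<rho> \<and> p 2 4 = \<rho> \<and> p 3 4 = cnj \<tau> \<and> p 4 4 = \<tau>))"

end

theory Submission
  imports Defs
begin

(* Write A_i = adj (R i). The hypotheses provide nonzero matrices E_0, ..., E_4 of the
   Bose-Mesner algebra with A_i E_j = p i j E_j. As the algebra is closed under products, each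
   column j of the table is multiplicative: p i j * p k j = (SUM m. p^m_ik * p m j). Distinct
   columns are therefore linearly independent (Dedekind), hence so are E_0, ..., E_4; since there
   are as many of them as relations, they span the algebra, in particular the identity. So the
   product of the A_i - p i j over all j annihilates every E_j and vanishes, and the eigenvalues
   of A_i are exactly the entries of row i.

   In a type 3 table row 1 is (k_1/2, rho, sigma, cnj sigma, cnj rho), with five distinct entries
   iff r_1 ~= r_2; rows 3 and 4 likewise need t_1 ~= t_2. If a column contains an entry p i j
   that is not a natural number, then A_i J = k_i J for the all-ones matrix J = SUM_i A_i forces
   J E_j = 0, i.e. the column sums to zero. This gives 1 + r_1 + t_1 = 0 = 1 + r_2 + t_2, so
   r_1 = r_2 would force t_1 = t_2 and then column 1 + column 4 = column 2 + column 3,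
   contradicting the independence of the columns. *)

section \<open>Linear algebra\<close>

lemma mat_matrix_mult_nth: "(mat a ** M) $ i $ j = a * M $ i $ j"
  for M :: "'a::semiring_1^'n^'m"
  by (simp add: matrix_matrix_mult_def mat_def if_distrib if_distribR sum.delta' cong: if_cong)

lemma mat_matrix_mult_mat: "mat a ** (mat b ** M) = mat (a * b) ** M"
  for M :: "'a::semiring_1^'n^'m"
  by (simp add: vec_eq_iff mat_matrix_mult_nth mult.assoc)

lemma sum_mat_matrix_mult: "(\<Sum>i\<in>S. mat (f i) ** M) = mat (\<Sum>i\<in>S. f i) ** M"
  for M :: "'a::semiring_1^'n^'m"
  by (simp add: vec_eq_iff mat_matrix_mult_nth sum_component sum_distrib_right)

lemma sum_matrix_mult: "(\<Sum>i\<in>S. f i) ** M = (\<Sum>i\<in>S. f i ** M)"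
  for M :: "'a::semiring_1^'n^'m"
  by (simp add: vec_eq_iff matrix_matrix_mult_def sum_component sum_distrib_right sum.swap[of _ UNIV S])

lemma matrix_mult_sum: "M ** (\<Sum>i\<in>S. f i) = (\<Sum>i\<in>S. M ** f i)"
  for M :: "'a::semiring_1^'n^'m"
  by (simp add: vec_eq_iff matrix_matrix_mult_def sum_component sum_distrib_left sum.swap[of _ UNIV S])

lemma mat_matrix_mult_cancel:
  fixes M :: "'a::idom^'n^'m"
  assumes "M \<noteq> 0" and "mat a ** M = mat b ** M"
  shows "a = b"
proof -
  obtain i j where "M $ i $ j \<noteq> 0"
    using assms(1) by (metis vec_eq_iff zero_index)
  moreover have "a * M $ i $ j = b * M $ i $ j"
    using assms(2) by (metis mat_matrix_mult_nth)
  ultimately show ?thesis by simp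
qed

lemma mat_matrix_mult_vector: "(mat a ** M) *v v = a *s (M *v v)"
  for M :: "'a::comm_semiring_1^'n^'m"
  by (simp add: vec_eq_iff matrix_vector_mult_def mat_matrix_mult_nth sum_distrib_left mult.assoc)

lemma matrix_vector_mult_scale: "M *v (a *s v) = a *s (M *v v)"
  for M :: "'a::comm_semiring_1^'n^'m"
  by (simp add: vec_eq_iff matrix_vector_mult_def sum_distrib_left mult_ac)

lemma mat_vector_mult: "mat a *v v = a *s v"
  for v :: "'a::semiring_1^'n"
  by (simp add: vec_eq_iff matrix_vector_mult_def mat_def if_distrib if_distribR sum.delta' cong: if_cong)

lemma prod_list_shifted_eq_0_iff: "(\<Prod>z\<leftarrow>zs. e - z) = 0 \<longleftrightarrow> e \<in> set zs"
  for e :: "'a::idom"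
  by (induction zs) auto

lemma eigenvector_foldr_shifted_product:
  fixes A :: "'a::comm_ring_1^'n^'n"
  assumes "A *v v = e *s v"
  shows "foldr (\<lambda>z M. (A - mat z) ** M) zs (mat 1) *v v = (\<Prod>z\<leftarrow>zs. e - z) *s v"
proof (induction zs)
  case Nil
  then show ?case by simp
next
  case (Cons z zs)
  have "((A - mat z) ** foldr (\<lambda>z M. (A - mat z) ** M) zs (mat 1)) *v v
      = (\<Prod>z\<leftarrow>zs. e - z) *s (A *v v - z *s v)"
    using Cons by (simp add: matrix_vector_mul_assoc[symmetric] matrix_vector_mult_scale
        matrix_vector_mult_diff_rdistrib mat_vector_mult)
  also have "\<dots> = (\<Prod>z\<leftarrow>z # zs. e - z) *s v"
    using assms by (simp add: vec_eq_iff algebra_simps)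
  finally show ?case by simp
qed

text \<open>Dedekind's lemma: the points \<open>l\<close> act as distinct characters of the algebra spanned by
  the functions \<open>f i\<close>.\<close>

lemma point_evaluations_independent:
  fixes f :: "'i \<Rightarrow> 'l \<Rightarrow> 'a::field"
  assumes "finite L"
    and one: "i\<^sub>0 \<in> I" "\<And>l. l \<in> L \<Longrightarrow> f i\<^sub>0 l = 1"
    and mult: "\<And>i j. i \<in> I \<Longrightarrow> j \<in> I \<Longrightarrow> \<exists>c. \<forall>l\<in>L. f i l * f j l = (\<Sum>k\<in>I. c k * f k l)"
    and separating: "\<And>l l'. l \<in> L \<Longrightarrow> l' \<in> L \<Longrightarrow> l \<noteq> l' \<Longrightarrow> \<exists>i\<in>I. f i l \<noteq> f i l'"
    and a: "\<forall>i\<in>I. (\<Sum>l\<in>L. a l * f i l) = 0"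
  shows "\<forall>l\<in>L. a l = 0"
  using a
proof (induction "card {l\<in>L. a l \<noteq> 0}" arbitrary: a rule: less_induct)
  case less
  show ?case
  proof (rule ccontr)
    assume "\<not> (\<forall>l\<in>L. a l = 0)"
    then obtain l where l: "l \<in> L" "a l \<noteq> 0" by blast
    show False
    proof (cases "\<exists>l'\<in>L. l' \<noteq> l \<and> a l' \<noteq> 0")
      case False
      then have "(\<Sum>m\<in>L. a m * f i\<^sub>0 m) = a l"
        using l \<open>finite L\<close> one(2) by (auto simp: sum.remove[of L l] intro!: sum.neutral)
      then show False
        using less.prems one(1) l(2) by auto
    next
      case True
      then obtain l' where l': "l' \<in> L" "l' \<noteq> l" "a l' \<noteq> 0" by blast
      obtain i where i: "i \<in> I" "f i l \<noteq> f i l'"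
        using separating l(1) l'(1,2) by metis
      \<comment> \<open>Multiplying by \<open>f i - f i l'\<close> gives a relation with smaller support, nonzero at \<open>l\<close>.\<close>
      define b where "b m = a m * (f i m - f i l')" for m
      have "(\<Sum>m\<in>L. b m * f j m) = 0" if j: "j \<in> I" for j
      proof -
        obtain c where c: "\<forall>m\<in>L. f i m * f j m = (\<Sum>k\<in>I. c k * f k m)"
          using mult[OF i(1) j] by blast
        have "(\<Sum>m\<in>L. a m * f i m * f j m) = (\<Sum>k\<in>I. c k * (\<Sum>m\<in>L. a m * f k m))"
          by (simp add: c mult.assoc sum_distrib_left sum_distrib_right mult.left_commute
              sum.swap[of _ L I])
        moreover have "(\<Sum>m\<in>L. b m * f j m)
            = (\<Sum>m\<in>L. a m * f i m * f j m) - f i l' * (\<Sum>m\<in>L. a m * f j m)"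
          by (simp add: b_def algebra_simps sum_subtractf sum_distrib_left)
        ultimately show ?thesis
          using less.prems j by simp
      qed
      moreover have "card {m\<in>L. b m \<noteq> 0} < card {m\<in>L. a m \<noteq> 0}"
        using \<open>finite L\<close> l' by (intro psubset_card_mono) (auto simp: b_def)
      ultimately have "\<forall>m\<in>L. b m = 0"
        using less.hyps by blast
      then show False
        using l i(2) by (auto simp: b_def)
    qed
  qed
qed

lemma independent_matrices_span:
  fixes U :: "'l \<Rightarrow> 'a::field^'n^'m" and W :: "'i \<Rightarrow> 'a^'n^'m"
  assumes "finite I" "finite L" "card I \<le> card L"
    and in_span: "\<And>l. l \<in> L \<Longrightarrow> \<exists>c. U l = (\<Sum>i\<in>I. mat (c i) ** W i)"
    and independent: "\<And>a. (\<Sum>l\<in>L. mat (a l) ** U l) = 0 \<Longrightarrow> \<forall>l\<in>L. a l = 0"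
  shows "\<exists>a. (\<Sum>i\<in>I. mat (c i) ** W i) = (\<Sum>l\<in>L. mat (a l) ** U l)"
proof -
  \<comment> \<open>Steinitz exchange; the library's dimension theory is about vectors, so flatten matrices.\<close>
  define flat :: "'a^'n^'m \<Rightarrow> 'a^('m \<times> 'n)" where "flat M = (\<chi> rs. M $ fst rs $ snd rs)" for M
  have flat_sum: "flat (\<Sum>j\<in>J. mat (b j) ** M j) = (\<Sum>j\<in>J. b j *s flat (M j))"
    for J and b :: "'j \<Rightarrow> 'a" and M
    by (simp add: vec_eq_iff flat_def mat_matrix_mult_nth sum_component)
  have flat_eq_iff: "flat M = flat N \<longleftrightarrow> M = N" for M N
    by (auto simp: vec_eq_iff flat_def)
  let ?B = "(\<lambda>l. flat (U l)) ` L"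
  let ?V = "vec.span ((\<lambda>i. flat (W i)) ` I)"
  have "inj_on (\<lambda>l. flat (U l)) L"
  proof (rule inj_onI, rule ccontr)
    fix l l' assume l: "l \<in> L" "l' \<in> L" "flat (U l) = flat (U l')" "l \<noteq> l'"
    define a where "a m = (if m = l then 1 else if m = l' then - 1 else 0 :: 'a)" for m
    have "(\<Sum>m\<in>L. mat (a m) ** U m) = (\<Sum>m\<in>{l, l'}. mat (a m) ** U m)"
      using l \<open>finite L\<close> by (intro sum.mono_neutral_right) (auto simp: a_def)
    also have "\<dots> = 0"
      using l flat_eq_iff[of "U l" "U l'"] by (simp add: a_def vec_eq_iff mat_matrix_mult_nth)
    finally show False
      using independent l(1,4) by (fastforce simp: a_def)
  qed
  have "?B \<subseteq> ?V"
    using in_span by (force simp: flat_sum intro: vec.span_sum vec.span_scale vec.span_base)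
  moreover have "vec.independent ?B"
    unfolding vec.independent_explicit
  proof (intro conjI allI impI ballI)
    fix u v assume u: "(\<Sum>v\<in>?B. u v *s v) = 0" and "v \<in> ?B"
    have "flat (\<Sum>l\<in>L. mat (u (flat (U l))) ** U l) = (\<Sum>v\<in>?B. u v *s v)"
      by (simp add: flat_sum sum.reindex[OF \<open>inj_on _ L\<close>])
    also have "\<dots> = flat 0"
      using u by (simp add: flat_def vec_eq_iff)
    finally have "(\<Sum>l\<in>L. mat (u (flat (U l))) ** U l) = 0"
      by (simp add: flat_eq_iff)
    then show "u v = 0"
      using independent[of "\<lambda>l. u (flat (U l))"] \<open>v \<in> ?B\<close> by auto
  qed (use \<open>finite L\<close> in simp)
  moreover have "vec.dim ?V \<le> card ?B"
  proof -
    have "vec.dim ?V \<le> card ((\<lambda>i. flat (W i)) ` I)"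
      using \<open>finite I\<close> by (intro vec.dim_le_card) auto
    also have "\<dots> \<le> card L"
      using assms(3) card_image_le[OF \<open>finite I\<close>] by (meson le_trans)
    finally show ?thesis
      by (simp add: card_image[OF \<open>inj_on _ L\<close>])
  qed
  ultimately have "?V \<subseteq> vec.span ?B"
    by (rule vec.card_ge_dim_independent)
  moreover have "flat (\<Sum>i\<in>I. mat (c i) ** W i) \<in> ?V"
    by (auto simp: flat_sum intro: vec.span_sum vec.span_scale vec.span_base)
  ultimately obtain u where "flat (\<Sum>i\<in>I. mat (c i) ** W i) = (\<Sum>v\<in>?B. u v *s v)"
    using vec.span_finite[of ?B] \<open>finite L\<close> by auto
  then have "flat (\<Sum>i\<in>I. mat (c i) ** W i) = flat (\<Sum>l\<in>L. mat (u (flat (U l))) ** U l)"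
    by (simp add: flat_sum sum.reindex[OF \<open>inj_on _ L\<close>])
  then show ?thesis
    by (auto simp: flat_eq_iff)
qed

lemma matrix_mult_mat_matrix: "A ** (mat a ** M) = mat a ** (A ** M)"
  for A :: "'a::comm_semiring_1^'n^'m"
  by (simp add: vec_eq_iff mat_matrix_mult_nth matrix_matrix_mult_def[of A] sum_distrib_left mult_ac)

section \<open>Association schemes\<close>

lemma adj_Id: "adj Id = mat 1"
  by (simp add: vec_eq_iff adj_def mat_def)

lemma assoc_scheme_R0: "assoc_scheme d R \<Longrightarrow> R 0 = Id"
  by (simp add: assoc_scheme_def)

lemma assoc_scheme_disjoint:
  assumes "assoc_scheme d R" "i \<le> d" "j \<le> d" "(x, y) \<in> R i" "(x, y) \<in> R j"
  shows "i = j"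
proof (rule ccontr)
  assume "i \<noteq> j"
  then have "R i \<inter> R j = {}"
    using assms(1-3) by (simp add: assoc_scheme_def)
  then show False
    using assms(4,5) by blast
qed

lemma assoc_scheme_class_exists:
  assumes "assoc_scheme d R"
  obtains k where "k \<le> d" "(x, y) \<in> R k"
proof -
  have "(x, y) \<in> (\<Union>i\<le>d. R i)"
    using assms by (simp add: assoc_scheme_def)
  then show ?thesis
    using that by blast
qed

lemma assoc_scheme_converse:
  "assoc_scheme d R \<Longrightarrow> i \<le> d \<Longrightarrow> \<exists>j\<le>d. (R i)\<inverse> = R j"
  by (simp add: assoc_scheme_def)

lemma assoc_scheme_intersection_number:
  "assoc_scheme d R \<Longrightarrow> i \<le> d \<Longrightarrow> j \<le> d \<Longrightarrow> k \<le> d \<Longrightarrow>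
    \<exists>q. \<forall>x y. (x, y) \<in> R k \<longrightarrow> card {z. (x, z) \<in> R i \<and> (z, y) \<in> R j} = q"
  by (simp add: assoc_scheme_def)

lemma bose_mesner_nth:
  assumes "assoc_scheme d R" "k \<le> d" "(x, y) \<in> R k"
  shows "(\<Sum>i\<le>d. mat (c i) ** adj (R i)) $ x $ y = c k"
proof -
  have "(\<Sum>i\<le>d. mat (c i) ** adj (R i)) $ x $ y = (\<Sum>i\<le>d. c i * (if (x, y) \<in> R i then 1 else 0))"
    by (simp add: sum_component mat_matrix_mult_nth adj_def)
  also have "\<dots> = (\<Sum>i\<le>d. if i = k then c k else 0)"
  proof (intro sum.cong refl)
    fix i assume "i \<in> {..d}"
    then have "(x, y) \<in> R i \<longleftrightarrow> i = k"
      using assoc_scheme_disjoint[OF assms(1), of i k x y] assms(2,3) by auto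
    then show "c i * (if (x, y) \<in> R i then 1 else 0) = (if i = k then c k else 0)"
      by simp
  qed
  also have "\<dots> = c k"
    using assms(2) by simp
  finally show ?thesis .
qed

lemma assoc_scheme_adj_mult_mem:
  assumes scheme: "assoc_scheme d R" and "i \<le> d" "j \<le> d"
  shows "adj (R i) ** adj (R j) \<in> bose_mesner d R"
proof -
  have "\<forall>k. \<exists>q::nat. k \<le> d \<longrightarrow>
      (\<forall>x y. (x, y) \<in> R k \<longrightarrow> card {z. (x, z) \<in> R i \<and> (z, y) \<in> R j} = q)"
    using assoc_scheme_intersection_number[OF scheme assms(2,3)] by blast
  then obtain q where q: "\<And>k x y. k \<le> d \<Longrightarrow> (x, y) \<in> R k \<Longrightarrow>
      card {z. (x, z) \<in> R i \<and> (z, y) \<in> R j} = q k"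
    by metis
  have "(adj (R i) ** adj (R j)) $ x $ y = (\<Sum>k\<le>d. mat (of_nat (q k)) ** adj (R k)) $ x $ y"
    for x y
  proof -
    obtain k where k: "k \<le> d" "(x, y) \<in> R k"
      using assoc_scheme_class_exists[OF scheme] .
    have "(adj (R i) ** adj (R j)) $ x $ y = of_nat (card {z. (x, z) \<in> R i \<and> (z, y) \<in> R j})"
      by (simp add: matrix_matrix_mult_def adj_def if_distrib if_distribR sum.If_cases
          Int_def conj_commute)
    then show ?thesis
      using k q bose_mesner_nth[OF scheme k] by simp
  qed
  then have "adj (R i) ** adj (R j) = (\<Sum>k\<le>d. mat (of_nat (q k)) ** adj (R k))"
    by (simp add: vec_eq_iff)
  then show ?thesis
    unfolding bose_mesner_def by (intro CollectI exI[of _ "\<lambda>k. of_nat (q k)"])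
qed

lemma assoc_scheme_sum_adj:
  fixes R :: "nat \<Rightarrow> ('x::finite \<times> 'x) set"
  assumes "assoc_scheme d R"
  shows "(\<Sum>k\<le>d. adj (R k)) = (\<chi> x y. 1)"
proof -
  have "(\<Sum>k\<le>d. adj (R k)) $ x $ y = 1" for x y
  proof -
    obtain k where "k \<le> d" "(x, y) \<in> R k"
      using assoc_scheme_class_exists[OF assms] .
    then show ?thesis
      using bose_mesner_nth[OF assms, of k x y "\<lambda>_. 1"] by simp
  qed
  then show ?thesis
    by (simp add: vec_eq_iff)
qed

lemma assoc_scheme_out_degree:
  assumes scheme: "assoc_scheme d R" and "i \<le> d"
  obtains \<kappa> where "\<And>x. card {y. (x, y) \<in> R i} = \<kappa>"
proof -
  obtain j where "j \<le> d" and conv: "(R i)\<inverse> = R j"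
    using assoc_scheme_converse[OF assms] by blast
  obtain \<kappa> where \<kappa>: "\<And>x y. (x, y) \<in> R 0 \<Longrightarrow> card {z. (x, z) \<in> R i \<and> (z, y) \<in> R j} = \<kappa>"
    using assoc_scheme_intersection_number[OF scheme assms(2) \<open>j \<le> d\<close>, of 0] by blast
  have "card {y. (x, y) \<in> R i} = \<kappa>" for x
  proof -
    have "{y. (x, y) \<in> R i} = {z. (x, z) \<in> R i \<and> (z, x) \<in> R j}"
      using conv by auto
    also have "card \<dots> = \<kappa>"
      using \<kappa> assoc_scheme_R0[OF scheme] by simp
    finally show ?thesis .
  qed
  then show ?thesis
    by (rule that)
qed

lemma assoc_scheme_adj_mult_ones:
  fixes R :: "nat \<Rightarrow> ('x::finite \<times> 'x) set"
  assumes "assoc_scheme d R" and "i \<le> d"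
  obtains \<kappa> :: nat
  where "adj (R i) ** (\<chi> x y. 1) = mat (of_nat \<kappa>) ** ((\<chi> x y. 1) :: complex^'x^'x)"
proof -
  obtain \<kappa> where \<kappa>: "\<And>x. card {y. (x, y) \<in> R i} = \<kappa>"
    using assoc_scheme_out_degree[OF assms] by blast
  have "(adj (R i) ** ((\<chi> x y. 1) :: complex^'x^'x)) $ x $ y = of_nat (card {z. (x, z) \<in> R i})"
    for x y
    by (simp add: matrix_matrix_mult_def adj_def sum.If_cases)
  then have "adj (R i) ** (\<chi> x y. 1) = mat (of_nat \<kappa>) ** ((\<chi> x y. 1) :: complex^'x^'x)"
    by (simp add: vec_eq_iff mat_matrix_mult_nth \<kappa>)
  then show ?thesis
    by (rule that)
qed

section \<open>Character tables\<close>

locale character_table =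
  fixes d :: nat and R :: "nat \<Rightarrow> ('x::finite \<times> 'x) set"
    and E :: "nat \<Rightarrow> complex^'x^'x" and p :: "nat \<Rightarrow> nat \<Rightarrow> complex"
  assumes scheme: "assoc_scheme d R"
    and E_mem: "\<And>j. j \<le> d \<Longrightarrow> E j \<in> bose_mesner d R"
    and E_nonzero: "\<And>j. j \<le> d \<Longrightarrow> E j \<noteq> 0"
    and adj_mult_E: "\<And>i j. i \<le> d \<Longrightarrow> j \<le> d \<Longrightarrow> adj (R i) ** E j = mat (p i j) ** E j"
    and columns_distinct: "\<And>j k. j \<le> d \<Longrightarrow> k \<le> d \<Longrightarrow> j \<noteq> k \<Longrightarrow> \<exists>i\<le>d. p i j \<noteq> p i k"
begin

lemma bose_mesner_mult_E:
  assumes "l \<le> d"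
  shows "(\<Sum>i\<le>d. mat (c i) ** adj (R i)) ** E l = mat (\<Sum>i\<le>d. c i * p i l) ** E l"
proof -
  have "(\<Sum>i\<le>d. mat (c i) ** adj (R i)) ** E l = (\<Sum>i\<le>d. mat (c i) ** (adj (R i) ** E l))"
    by (simp add: sum_matrix_mult matrix_mul_assoc)
  also have "\<dots> = (\<Sum>i\<le>d. mat (c i * p i l) ** E l)"
    using assms by (intro sum.cong refl) (simp add: adj_mult_E mat_matrix_mult_mat)
  finally show ?thesis
    by (simp add: sum_mat_matrix_mult)
qed

lemma adj_mult_mat_E:
  "i \<le> d \<Longrightarrow> l \<le> d \<Longrightarrow> adj (R i) ** (mat c ** E l) = mat (c * p i l) ** E l"
  by (subst matrix_mult_mat_matrix) (simp add: adj_mult_E mat_matrix_mult_mat)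

lemma p_0_eq_1: "l \<le> d \<Longrightarrow> p 0 l = 1"
  using adj_mult_E[of 0 l] E_nonzero[of l] mat_matrix_mult_cancel[of "E l" "p 0 l" 1]
  by (simp add: assoc_scheme_R0[OF scheme] adj_Id)

lemma columns_multiplicative:
  assumes "i \<le> d" "j \<le> d"
  shows "\<exists>c. \<forall>l\<le>d. p i l * p j l = (\<Sum>k\<le>d. c k * p k l)"
proof -
  have "adj (R i) ** adj (R j) \<in> bose_mesner d R"
    using assms by (simp add: assoc_scheme_adj_mult_mem[OF scheme])
  then obtain c where c: "adj (R i) ** adj (R j) = (\<Sum>k\<le>d. mat (c k) ** adj (R k))"
    unfolding bose_mesner_def by blast
  have "p i l * p j l = (\<Sum>k\<le>d. c k * p k l)" if "l \<le> d" for l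
  proof (rule mat_matrix_mult_cancel[OF E_nonzero[OF that]])
    have "mat (p i l * p j l) ** E l = adj (R i) ** (mat (p j l) ** E l)"
      using that assms(1) by (simp add: adj_mult_mat_E mult.commute)
    also have "\<dots> = (adj (R i) ** adj (R j)) ** E l"
      using that assms(2) by (simp add: matrix_mul_assoc[symmetric] adj_mult_E)
    also have "\<dots> = mat (\<Sum>k\<le>d. c k * p k l) ** E l"
      using that by (simp add: c bose_mesner_mult_E)
    finally show "mat (p i l * p j l) ** E l = mat (\<Sum>k\<le>d. c k * p k l) ** E l" .
  qed
  then show ?thesis
    by blast
qed

lemma columns_linear_independent:
  assumes "\<forall>i\<le>d. (\<Sum>l\<le>d. a l * p i l) = 0" and "l \<le> d"
  shows "a l = 0"
proof -
  have "\<forall>l\<in>{..d}. a l = 0"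
  proof (rule point_evaluations_independent[where f = p and I = "{..d}" and i\<^sub>0 = 0])
    show "p 0 l = 1" if "l \<in> {..d}" for l
      using p_0_eq_1 that by simp
    show "\<exists>i\<in>{..d}. p i l \<noteq> p i l'" if "l \<in> {..d}" "l' \<in> {..d}" "l \<noteq> l'" for l l'
      using columns_distinct[of l l'] that by auto
    show "\<exists>c. \<forall>l\<in>{..d}. p i l * p j l = (\<Sum>k\<in>{..d}. c k * p k l)"
      if "i \<in> {..d}" "j \<in> {..d}" for i j
      using columns_multiplicative[of i j] that by auto
    show "\<forall>i\<in>{..d}. (\<Sum>l\<in>{..d}. a l * p i l) = 0"
      using assms(1) by simp
  qed simp_all
  then show ?thesis
    using assms(2) by simp
qed

lemma column_pair_sums_differ:
  assumes "j\<^sub>1 \<le> d" "j\<^sub>2 \<le> d" "k\<^sub>1 \<le> d" "k\<^sub>2 \<le> d" "distinct [j\<^sub>1, j\<^sub>2, k\<^sub>1, k\<^sub>2]"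
  shows "\<exists>i\<le>d. p i j\<^sub>1 + p i j\<^sub>2 \<noteq> p i k\<^sub>1 + p i k\<^sub>2"
proof (rule ccontr)
  assume contra: "\<not> ?thesis"
  define a :: "nat \<Rightarrow> complex"
    where "a l = of_bool (l = j\<^sub>1) + of_bool (l = j\<^sub>2) - of_bool (l = k\<^sub>1) - of_bool (l = k\<^sub>2)"
    for l
  have delta: "(\<Sum>l\<le>d. of_bool (l = j) * p i l) = p i j" if "j \<le> d" for i j
    using that by (simp add: of_bool_def if_distribR if_distrib cong: if_cong)
  have "(\<Sum>l\<le>d. a l * p i l) = 0" if "i \<le> d" for i
  proof -
    have "(\<Sum>l\<le>d. a l * p i l) = p i j\<^sub>1 + p i j\<^sub>2 - p i k\<^sub>1 - p i k\<^sub>2"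
      using assms(1-4) by (simp add: a_def ring_distribs sum.distrib sum_subtractf delta)
    then show ?thesis
      using contra that by auto
  qed
  then have "a j\<^sub>1 = 0"
    using columns_linear_independent[of a j\<^sub>1] assms(1) by blast
  then show False
    using assms(5) by (simp add: a_def)
qed

lemma E_linear_independent:
  assumes "(\<Sum>l\<le>d. mat (a l) ** E l) = 0" and "l \<le> d"
  shows "a l = 0"
proof -
  have "a l * E l $ x $ y = 0" for x y
  proof (rule columns_linear_independent[OF _ assms(2), of "\<lambda>l. a l * E l $ x $ y"], intro allI impI)
    fix i assume "i \<le> d"
    have "(\<Sum>l\<le>d. mat (a l * p i l) ** E l) = adj (R i) ** (\<Sum>l\<le>d. mat (a l) ** E l)"
      using \<open>i \<le> d\<close> by (simp add: matrix_mult_sum adj_mult_mat_E)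
    then have "(\<Sum>l\<le>d. mat (a l * p i l) ** E l) $ x $ y = 0"
      using assms(1) by simp
    then show "(\<Sum>l\<le>d. a l * E l $ x $ y * p i l) = 0"
      by (simp add: sum_component mat_matrix_mult_nth mult_ac)
  qed
  then show ?thesis
    using E_nonzero[OF assms(2)] by (auto simp: vec_eq_iff)
qed

lemma one_in_span_E: "\<exists>a. mat 1 = (\<Sum>l\<le>d. mat (a l) ** E l)"
proof -
  have "mat 1 = (\<Sum>i\<le>d. mat (if i = 0 then 1 else 0) ** adj (R i))"
    by (simp add: if_distrib[of mat] if_distrib[of "\<lambda>M. M ** _"] assoc_scheme_R0[OF scheme] adj_Id
        cong: if_cong)
  moreover have "\<exists>a. (\<Sum>i\<le>d. mat (if i = 0 then 1 else 0) ** adj (R i)) = (\<Sum>l\<le>d. mat (a l) ** E l)"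
  proof (rule independent_matrices_span)
    show "\<exists>c. E l = (\<Sum>i\<in>{..d}. mat (c i) ** adj (R i))" if "l \<in> {..d}" for l
      using E_mem that by (simp add: bose_mesner_def)
    show "\<forall>l\<in>{..d}. a l = 0" if "(\<Sum>l\<in>{..d}. mat (a l) ** E l) = 0" for a
      using E_linear_independent[of a] that by simp
  qed simp_all
  ultimately show ?thesis
    by simp
qed

lemma mult_E_eq_0_imp_eq_0:
  fixes M :: "complex^'x^'x"
  assumes "\<And>l. l \<le> d \<Longrightarrow> M ** E l = 0"
  shows "M = 0"
proof -
  obtain a where a: "mat 1 = (\<Sum>l\<le>d. mat (a l) ** E l)"
    using one_in_span_E by blast
  have "M = M ** mat 1"
    by simp
  also have "\<dots> = (\<Sum>l\<le>d. mat (a l) ** (M ** E l))"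
    by (subst a) (simp add: matrix_mult_sum matrix_mult_mat_matrix)
  also have "\<dots> = 0"
    using assms by simp
  finally show ?thesis .
qed

lemma row_product_adj_eq_0:
  assumes "i \<le> d"
  shows "foldr (\<lambda>z M. (adj (R i) - mat z) ** M) (map (p i) [0..<Suc d]) (mat 1) = 0"
    (is "?Q = 0")
proof (rule mult_E_eq_0_imp_eq_0)
  fix l assume "l \<le> d"
  have "?Q *v (E l *v w) = 0" for w
  proof -
    have "adj (R i) *v (E l *v w) = p i l *s (E l *v w)"
      using assms \<open>l \<le> d\<close> by (simp add: matrix_vector_mul_assoc adj_mult_E mat_matrix_mult_vector)
    then have "?Q *v (E l *v w) = (\<Prod>z\<leftarrow>map (p i) [0..<Suc d]. p i l - z) *s (E l *v w)"
      by (rule eigenvector_foldr_shifted_product)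
    moreover have "(\<Prod>z\<leftarrow>map (p i) [0..<Suc d]. p i l - z) = 0"
      unfolding prod_list_shifted_eq_0_iff using \<open>l \<le> d\<close> by (auto simp del: upt_Suc)
    ultimately show ?thesis
      by simp
  qed
  then show "?Q ** E l = 0"
    unfolding matrix_eq by (simp add: matrix_vector_mul_assoc)
qed

lemma eigenvalue_adj_iff:
  assumes "i \<le> d"
  shows "eigenvalue (adj (R i)) e \<longleftrightarrow> (\<exists>j\<le>d. e = p i j)"
proof
  assume "eigenvalue (adj (R i)) e"
  then obtain v where v: "v \<noteq> 0" "adj (R i) *v v = e *s v"
    by (auto simp: eigenvalue_def)
  have "(\<Prod>z\<leftarrow>map (p i) [0..<Suc d]. e - z) *s v
      = foldr (\<lambda>z M. (adj (R i) - mat z) ** M) (map (p i) [0..<Suc d]) (mat 1) *v v"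
    by (rule eigenvector_foldr_shifted_product[OF v(2), symmetric])
  then have "(\<Prod>z\<leftarrow>map (p i) [0..<Suc d]. e - z) *s v = 0"
    by (simp only: row_product_adj_eq_0[OF assms] matrix_vector_mult_0)
  then have "(\<Prod>z\<leftarrow>map (p i) [0..<Suc d]. e - z) = 0"
    using v(1) by (simp add: vector_mul_eq_0)
  then show "\<exists>j\<le>d. e = p i j"
    unfolding prod_list_shifted_eq_0_iff by (force simp: less_Suc_eq_le simp del: upt_Suc)
next
  assume "\<exists>j\<le>d. e = p i j"
  then obtain j where j: "j \<le> d" "e = p i j"
    by blast
  obtain w where w: "E j *v w \<noteq> 0"
    using E_nonzero[OF j(1)] matrix_eq[of "E j" 0] by auto
  have "adj (R i) *v (E j *v w) = e *s (E j *v w)"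
    using assms j by (simp add: matrix_vector_mul_assoc adj_mult_E mat_matrix_mult_vector)
  then show "eigenvalue (adj (R i)) e"
    using w by (auto simp: eigenvalue_def)
qed

lemma column_sum_eq_0:
  assumes "i \<le> d" "l \<le> d" "p i l \<notin> \<nat>"
  shows "(\<Sum>k\<le>d. p k l) = 0"
proof -
  \<comment> \<open>\<open>J\<close> is an eigenmatrix of \<open>adj (R i)\<close> for its valency, a natural number.\<close>
  define J :: "complex^'x^'x" where "J = (\<chi> x y. 1)"
  obtain \<kappa> :: nat where \<kappa>: "adj (R i) ** J = mat (of_nat \<kappa>) ** J"
    using assoc_scheme_adj_mult_ones[OF scheme assms(1)] unfolding J_def by blast
  have JE: "J ** E l = mat (\<Sum>k\<le>d. p k l) ** E l"
    using bose_mesner_mult_E[OF assms(2), of "\<lambda>_. 1"] assoc_scheme_sum_adj[OF scheme]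
    by (simp add: J_def)
  have "mat (of_nat \<kappa> * (\<Sum>k\<le>d. p k l)) ** E l = mat (of_nat \<kappa>) ** (J ** E l)"
    by (simp add: JE mat_matrix_mult_mat)
  also have "\<dots> = adj (R i) ** (J ** E l)"
    by (simp add: matrix_mul_assoc \<kappa>)
  also have "\<dots> = mat (p i l * (\<Sum>k\<le>d. p k l)) ** E l"
    using assms by (simp add: JE adj_mult_mat_E mult.commute)
  finally have eq: "of_nat \<kappa> * (\<Sum>k\<le>d. p k l) = p i l * (\<Sum>k\<le>d. p k l)"
    using E_nonzero[OF assms(2)] by (rule mat_matrix_mult_cancel[rotated])
  show ?thesis
  proof (rule ccontr)
    assume "(\<Sum>k\<le>d. p k l) \<noteq> 0"
    then have "p i l = of_nat \<kappa>"
      using eq by simp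
    then show False
      using assms(3) by simp
  qed
qed

lemma card_eigenvalues_adj:
  assumes "i \<le> d" and "inj_on (p i) {..d}"
  shows "card {e. eigenvalue (adj (R i)) e} = Suc d"
proof -
  have "{e. eigenvalue (adj (R i)) e} = p i ` {..d}"
    using eigenvalue_adj_iff[OF assms(1)] by auto
  then show ?thesis
    using assms(2) by (simp add: card_image)
qed

end

section \<open>Character tables of type 3\<close>

text \<open>The table of \<^const>\<open>char_table_type3\<close> with rows indexed by relations and columns by
  idempotents, i.e. transposed with respect to the paper.\<close>

definition type3_table ::
  "real \<Rightarrow> real \<Rightarrow> complex \<Rightarrow> complex \<Rightarrow> complex \<Rightarrow> complex \<Rightarrow> nat \<Rightarrow> nat \<Rightarrow> complex"
where
  "type3_table k\<^sub>1 k\<^sub>2 \<rho> \<tau> \<sigma> \<omega> i j =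
     [[1, 1, 1, 1, 1],
      [of_real (k\<^sub>1 / 2), \<rho>, \<sigma>, cnj \<sigma>, cnj \<rho>],
      [of_real (k\<^sub>1 / 2), cnj \<rho>, cnj \<sigma>, \<sigma>, \<rho>],
      [of_real (k\<^sub>2 / 2), \<tau>, \<omega>, cnj \<omega>, cnj \<tau>],
      [of_real (k\<^sub>2 / 2), cnj \<tau>, cnj \<omega>, \<omega>, \<tau>]] ! i ! j"

lemma le_4_cases: "(i::nat) \<le> 4 \<longleftrightarrow> i = 0 \<or> i = 1 \<or> i = 2 \<or> i = 3 \<or> i = 4"
  by auto

lemma char_table_type3E:
  fixes R :: "nat \<Rightarrow> ('x::finite \<times> 'x) set"
  assumes "char_table_type3 R"
  obtains E :: "nat \<Rightarrow> complex^'x^'x" and p :: "nat \<Rightarrow> nat \<Rightarrow> complex" and k\<^sub>1 k\<^sub>2 \<rho> \<tau> \<sigma> \<omega>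
  where "bij_betw E {0..4} {F. primitive_idempotent 4 R F}"
    and "\<And>i j. i \<le> 4 \<Longrightarrow> j \<le> 4 \<Longrightarrow> adj (R i) ** E j = mat (p i j) ** E j"
    and "\<And>i j. i \<le> 4 \<Longrightarrow> j \<le> 4 \<Longrightarrow> p i j = type3_table k\<^sub>1 k\<^sub>2 \<rho> \<tau> \<sigma> \<omega> i j"
    and "Im \<rho> > 0" "Im \<tau> > 0" "Im \<sigma> > 0" "Im \<omega> < 0"
proof -
  obtain E :: "nat \<Rightarrow> complex^'x^'x" and p :: "nat \<Rightarrow> nat \<Rightarrow> complex" and k\<^sub>1 k\<^sub>2 r\<^sub>1 t\<^sub>1 r\<^sub>2 t\<^sub>2 y z b c :: real
    where E: "bij_betw E {0..4} {F. primitive_idempotent 4 R F}"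
      and adj_E: "\<forall>i\<le>4. \<forall>j\<le>4. adj (R i) ** E j = mat (p i j) ** E j"
      and p0: "\<forall>j\<le>4. p 0 j = 1"
      and pos: "0 < y" "0 < z" "0 < b" "0 < c"
      and table: "let \<rho> = (of_real r\<^sub>1 + csqrt (of_real (-y))) / 2;
           \<tau> = (of_real t\<^sub>1 + csqrt (of_real (-z))) / 2;
           \<sigma> = (of_real r\<^sub>2 + csqrt (of_real (-b))) / 2;
           \<omega> = (of_real t\<^sub>2 - csqrt (of_real (-c))) / 2 in
        p 1 0 = of_real k\<^sub>1 / 2 \<and> p 2 0 = of_real k\<^sub>1 / 2 \<and>
        p 3 0 = of_real k\<^sub>2 / 2 \<and> p 4 0 = of_real k\<^sub>2 / 2 \<and>
        p 1 1 = \<rho> \<and> p 2 1 = cnj \<rho> \<and> p 3 1 = \<tau> \<and> p 4 1 = cnj \<tau> \<and>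
        p 1 2 = \<sigma> \<and> p 2 2 = cnj \<sigma> \<and> p 3 2 = \<omega> \<and> p 4 2 = cnj \<omega> \<and>
        p 1 3 = cnj \<sigma> \<and> p 2 3 = \<sigma> \<and> p 3 3 = cnj \<omega> \<and> p 4 3 = \<omega> \<and>
        p 1 4 = cnj \<rho> \<and> p 2 4 = \<rho> \<and> p 3 4 = cnj \<tau> \<and> p 4 4 = \<tau>"
    using assms unfolding char_table_type3_def by blast
  define \<rho> where "\<rho> = (of_real r\<^sub>1 + csqrt (of_real (-y))) / (2 :: complex)"
  define \<tau> where "\<tau> = (of_real t\<^sub>1 + csqrt (of_real (-z))) / (2 :: complex)"
  define \<sigma> where "\<sigma> = (of_real r\<^sub>2 + csqrt (of_real (-b))) / (2 :: complex)"
  define \<omega> where "\<omega> = (of_real t\<^sub>2 - csqrt (of_real (-c))) / (2 :: complex)"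
  have Im_csqrt: "Im (csqrt (of_real (- w))) = sqrt w" if "0 < w" for w :: real
    using that by (simp add: csqrt_of_real_nonpos)
  have "Im \<rho> > 0" "Im \<tau> > 0" "Im \<sigma> > 0" "Im \<omega> < 0"
    using pos by (simp_all add: \<rho>_def \<tau>_def \<sigma>_def \<omega>_def Im_csqrt)
  moreover have "p i j = type3_table k\<^sub>1 k\<^sub>2 \<rho> \<tau> \<sigma> \<omega> i j" if "i \<le> 4" "j \<le> 4" for i j
    using that p0 table
    unfolding le_4_cases Let_def \<rho>_def[symmetric] \<tau>_def[symmetric] \<sigma>_def[symmetric] \<omega>_def[symmetric]
    by (elim disjE) (simp_all add: type3_table_def)
  ultimately show ?thesis
    using that[OF E] adj_E by blast
qed

lemma type3_table_columns_distinct: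
  assumes "Im \<rho> > 0" "Im \<tau> > 0" "Im \<sigma> > 0" "Im \<omega> < 0" and "j \<le> 4" "k \<le> 4" "j \<noteq> k"
  shows "\<exists>i\<le>4. type3_table k\<^sub>1 k\<^sub>2 \<rho> \<tau> \<sigma> \<omega> i j \<noteq> type3_table k\<^sub>1 k\<^sub>2 \<rho> \<tau> \<sigma> \<omega> i k"
proof -
  have "type3_table k\<^sub>1 k\<^sub>2 \<rho> \<tau> \<sigma> \<omega> 1 j \<noteq> type3_table k\<^sub>1 k\<^sub>2 \<rho> \<tau> \<sigma> \<omega> 1 k \<or>
      type3_table k\<^sub>1 k\<^sub>2 \<rho> \<tau> \<sigma> \<omega> 3 j \<noteq> type3_table k\<^sub>1 k\<^sub>2 \<rho> \<tau> \<sigma> \<omega> 3 k"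
    using assms unfolding le_4_cases by (elim disjE) (auto simp: type3_table_def complex_eq_iff)
  moreover have "(1::nat) \<le> 4" "(3::nat) \<le> 4"
    by simp_all
  ultimately show ?thesis
    by blast
qed

lemma type3_table_row_inj_on:
  assumes "Im \<rho> > 0" "Im \<tau> > 0" "Im \<sigma> > 0" "Im \<omega> < 0" "Re \<rho> \<noteq> Re \<sigma>" "Re \<tau> \<noteq> Re \<omega>"
    and "1 \<le> i" "i \<le> 4"
  shows "inj_on (type3_table k\<^sub>1 k\<^sub>2 \<rho> \<tau> \<sigma> \<omega> i) {..4}"
proof -
  have "distinct (map (type3_table k\<^sub>1 k\<^sub>2 \<rho> \<tau> \<sigma> \<omega> i) [0, 1, 2, 3, 4])"
    using assms unfolding le_4_cases by (auto simp: type3_table_def complex_eq_iff)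
  then have "inj_on (type3_table k\<^sub>1 k\<^sub>2 \<rho> \<tau> \<sigma> \<omega> i) (set [0, 1, 2, 3, 4])"
    unfolding distinct_map by blast
  moreover have "set [0, 1, 2, 3, 4] = {..4::nat}"
    by auto
  ultimately show ?thesis
    by (simp only:)
qed

lemma type3_table_column_sums:
  "(\<Sum>i\<le>4. type3_table k\<^sub>1 k\<^sub>2 \<rho> \<tau> \<sigma> \<omega> i 1) = of_real (1 + 2 * Re \<rho> + 2 * Re \<tau>)"
  "(\<Sum>i\<le>4. type3_table k\<^sub>1 k\<^sub>2 \<rho> \<tau> \<sigma> \<omega> i 2) = of_real (1 + 2 * Re \<sigma> + 2 * Re \<omega>)"
proof -
  have "{..4::nat} = {0, 1, 2, 3, 4}"
    by auto
  then show "(\<Sum>i\<le>4. type3_table k\<^sub>1 k\<^sub>2 \<rho> \<tau> \<sigma> \<omega> i 1) = of_real (1 + 2 * Re \<rho> + 2 * Re \<tau>)"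
    "(\<Sum>i\<le>4. type3_table k\<^sub>1 k\<^sub>2 \<rho> \<tau> \<sigma> \<omega> i 2) = of_real (1 + 2 * Re \<sigma> + 2 * Re \<omega>)"
    by (simp_all add: type3_table_def complex_eq_iff)
qed

lemma type3_table_pair_sums:
  assumes "Re \<rho> = Re \<sigma>" "Re \<tau> = Re \<omega>" "i \<le> 4"
  shows "type3_table k\<^sub>1 k\<^sub>2 \<rho> \<tau> \<sigma> \<omega> i 1 + type3_table k\<^sub>1 k\<^sub>2 \<rho> \<tau> \<sigma> \<omega> i 4
    = type3_table k\<^sub>1 k\<^sub>2 \<rho> \<tau> \<sigma> \<omega> i 2 + type3_table k\<^sub>1 k\<^sub>2 \<rho> \<tau> \<sigma> \<omega> i 3"
  using assms unfolding le_4_cases by (elim disjE) (simp_all add: type3_table_def complex_eq_iff)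

lemma type3_real_parts_distinct:
  assumes "character_table 4 R E p"
    and Im: "Im \<rho> > 0" "Im \<tau> > 0" "Im \<sigma> > 0" "Im \<omega> < 0"
    and p: "\<And>i j. i \<le> 4 \<Longrightarrow> j \<le> 4 \<Longrightarrow> p i j = type3_table k\<^sub>1 k\<^sub>2 \<rho> \<tau> \<sigma> \<omega> i j"
  shows "Re \<rho> \<noteq> Re \<sigma>" and "Re \<tau> \<noteq> Re \<omega>"
proof -
  interpret character_table 4 R E p
    by fact
  have "p 1 1 \<notin> \<nat>" "p 1 2 \<notin> \<nat>"
    using Im p[of 1 1] p[of 1 2] by (auto simp: type3_table_def Nats_def)
  then have "(\<Sum>i\<le>4. p i 1) = 0" "(\<Sum>i\<le>4. p i 2) = 0"
    using column_sum_eq_0[of 1 1] column_sum_eq_0[of 1 2] by simp_all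
  moreover have "(\<Sum>i\<le>4. p i l) = (\<Sum>i\<le>4. type3_table k\<^sub>1 k\<^sub>2 \<rho> \<tau> \<sigma> \<omega> i l)" if "l \<le> 4" for l
    using p that by simp
  ultimately have sums: "1 + 2 * Re \<rho> + 2 * Re \<tau> = 0" "1 + 2 * Re \<sigma> + 2 * Re \<omega> = 0"
    using type3_table_column_sums[of k\<^sub>1 k\<^sub>2 \<rho> \<tau> \<sigma> \<omega>] by (simp_all del: of_real_add)
  show "Re \<rho> \<noteq> Re \<sigma>"
  proof
    assume "Re \<rho> = Re \<sigma>"
    moreover from this have "Re \<tau> = Re \<omega>"
      using sums by simp
    ultimately have "\<forall>i\<le>4. p i 1 + p i 4 = p i 2 + p i 3"
      using p type3_table_pair_sums by simp
    then show False
      using column_pair_sums_differ[of 1 4 2 3] by auto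
  qed
  then show "Re \<tau> \<noteq> Re \<omega>"
    using sums by simp
qed

lemma type3_character_table:
  assumes "skew_symmetric_scheme 4 R"
    and E: "bij_betw E {0..4} {F. primitive_idempotent 4 R F}"
    and adj_E: "\<And>i j. i \<le> 4 \<Longrightarrow> j \<le> 4 \<Longrightarrow> adj (R i) ** E j = mat (p i j) ** E j"
    and p: "\<And>i j. i \<le> 4 \<Longrightarrow> j \<le> 4 \<Longrightarrow> p i j = type3_table k\<^sub>1 k\<^sub>2 \<rho> \<tau> \<sigma> \<omega> i j"
    and Im: "Im \<rho> > 0" "Im \<tau> > 0" "Im \<sigma> > 0" "Im \<omega> < 0"
  shows "character_table 4 R E p"
proof
  show "assoc_scheme 4 R"
    using assms(1) by (simp add: skew_symmetric_scheme_def)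
  show "E j \<in> bose_mesner 4 R" "E j \<noteq> 0" if "j \<le> 4" for j
    using E that by (auto simp: bij_betw_def primitive_idempotent_def)
  show "\<exists>i\<le>4. p i j \<noteq> p i k" if jk: "j \<le> 4" "k \<le> 4" "j \<noteq> k" for j k
  proof -
    obtain i where "i \<le> 4" "type3_table k\<^sub>1 k\<^sub>2 \<rho> \<tau> \<sigma> \<omega> i j \<noteq> type3_table k\<^sub>1 k\<^sub>2 \<rho> \<tau> \<sigma> \<omega> i k"
      using type3_table_columns_distinct[OF Im jk] by blast
    then show ?thesis
      using p[of i j] p[of i k] jk by auto
  qed
qed (rule adj_E)

theorem proposition4p3:
  fixes R :: "nat \<Rightarrow> ('x::finite \<times> 'x) set"
  assumes "skew_symmetric_scheme 4 R"
    and "(R 1)\<inverse> = R 2" and "(R 3)\<inverse> = R 4"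
    and "char_table_type3 R"
  shows "\<forall>i. 1 \<le> i \<and> i \<le> 4 \<longrightarrow> card {e. eigenvalue (adj (R i)) e} = 5"
proof -
  \<comment> \<open>The pairing of transposed relations is already built into the type 3 table.\<close>
  obtain E :: "nat \<Rightarrow> complex^'x^'x" and p :: "nat \<Rightarrow> nat \<Rightarrow> complex"
    and k\<^sub>1 k\<^sub>2 \<rho> \<tau> \<sigma> \<omega>
    where E: "bij_betw E {0..4} {F. primitive_idempotent 4 R F}"
      and adj_E: "\<And>i j. i \<le> 4 \<Longrightarrow> j \<le> 4 \<Longrightarrow> adj (R i) ** E j = mat (p i j) ** E j"
      and p: "\<And>i j. i \<le> 4 \<Longrightarrow> j \<le> 4 \<Longrightarrow> p i j = type3_table k\<^sub>1 k\<^sub>2 \<rho> \<tau> \<sigma> \<omega> i j"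
      and Im: "Im \<rho> > 0" "Im \<tau> > 0" "Im \<sigma> > 0" "Im \<omega> < 0"
    using char_table_type3E[OF assms(4)] by blast
  have table: "character_table 4 R E p"
    using assms(1) E adj_E p Im by (rule type3_character_table)
  have "Re \<rho> \<noteq> Re \<sigma>" "Re \<tau> \<noteq> Re \<omega>"
    using type3_real_parts_distinct[OF table Im p] by blast+
  then have "inj_on (p i) {..4}" if "1 \<le> i" "i \<le> 4" for i
    using type3_table_row_inj_on[OF Im _ _ that] that by (simp add: inj_on_def p)
  then show ?thesis
    using character_table.card_eigenvalues_adj[OF table] by simp
qed

end
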